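(* Let $\mathcal H=(M,n,\mathcal R)$ be a BMS, let $S\subseteq\mathbb R^n$ be a bounded convex polytope, and let $x_0$ be a point in the interior of $S$. Then the scheduler has a winning strategy from $x_0$ in the schedulability game with safety set $S$ if and only if $\mathcal H$ is safe.
   Context: A multi-mode system is a tuple $\mathcal H=(M,n,\mathcal R)$ with $M$ a finite nonempty set of modes, $n\ge1$ variables, and $\mathcal R:M\to 2^{\mathbb R^n}$ giving nonempty rate sets; it is a BMS if each $\mathcal R(m)$ is a bounded convex polytope, and a CMS if each $\mathcal R(m)$ is a singleton. An instance of $(M,n,\mathcal R)$ is a CMS $(M,n,R)$ with $R(m)\in\mathcal R(m)$ for all $m$. A CMS $(M,n,R)$ is safe if there are $t_m\ge0$ with $\sum_m t_m=1$ and $\sum_m t_mR(m)=\vec0$. $\mathrm{Ext}(\mathcal H)=(M,n,\mathcal R')$ where $\mathcal R'(m)$ is the vertex set of $\mathcal R(m)$; $\mathcal H$ is safe if every instance of $\mathrm{Ext}(\mathcal H)$ is safe. The schedulability game from $x_0$: in round $i\ge1$ the scheduler chooses $(m_i,t_i)\in M\times\mathbb R_{>0}$, the environment chooses $r_i\in\mathcal R(m_i)$, and $x_i=x_{i-1}+t_ir_i$. Scheduler strategies map finite histories $\langle x_0,(m_1,t_1),r_1,x_1,\dots,x_k\rangle$ to timed moves; environment strategies map a history and the current timed move $(m,t)$ to a rate in $\mathcal R(m)$. A run is $S$-safe if $x_i\in S$ and $x_i+tr_{i+1}\in S$ for all $i\ge0$, $t\in[0,t_{i+1}]$, and non-Zeno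 if $\sum_it_i=\infty$. A scheduler strategy is winning if against every environment strategy the run is $S$-safe and non-Zeno. *)

theory Defs
  imports "HOL-Analysis.Analysis"
begin

text \<open>Points of R^n are elements of type real^'n ('n a finite index type, so n = CARD('n) \<ge> 1).
 A multi-mode system is given by a finite nonempty mode set M and a rate-set map.\<close>

definition is_BMS :: "'m set \<Rightarrow> ('m \<Rightarrow> (real^'n) set) \<Rightarrow> bool" where
  "is_BMS M Rs \<longleftrightarrow> finite M \<and> M \<noteq> {} \<and>
     (\<forall>m\<in>M. Rs m \<noteq> {} \<and> polytope (Rs m))"

definition cms_safe :: "'m set \<Rightarrow> ('m \<Rightarrow> real^'n) \<Rightarrow> bool" where
  "cms_safe M R \<longleftrightarrow> (\<exists>t::'m \<Rightarrow> real. (\<forall>m\<in>M. t m \<ge> 0) \<and> (\<Sum>m\<in>M. t m) = 1 \<and>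
       (\<Sum>m\<in>M. t m *\<^sub>R R m) = 0)"

definition vertices :: "(real^'n) set \<Rightarrow> (real^'n) set" where
  "vertices P = {v. v extreme_point_of P}"

definition mms_safe :: "'m set \<Rightarrow> ('m \<Rightarrow> (real^'n) set) \<Rightarrow> bool" where
  "mms_safe M Rs \<longleftrightarrow> (\<forall>R. (\<forall>m\<in>M. R m \<in> vertices (Rs m)) \<longrightarrow> cms_safe M R)"

text \<open>A history (after x0, which is fixed) is the list of rounds ((m_i,t_i), r_i);
 the states x_i are determined by x0 and the rounds.\<close>
type_synonym ('m, 'n) history = "(('m \<times> real) \<times> (real^'n)) list"

definition sched_strategy :: "'m set \<Rightarrow> (('m,'n) history \<Rightarrow> 'm \<times> real) \<Rightarrow> bool" where
  "sched_strategy M \<sigma> \<longleftrightarrow> (\<forall>h. fst (\<sigma> h) \<in> M \<and> snd (\<sigma> h) > 0)"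

definition env_strategy :: "'m set \<Rightarrow> ('m \<Rightarrow> (real^'n) set) \<Rightarrow>
     (('m,'n) history \<Rightarrow> 'm \<times> real \<Rightarrow> real^'n) \<Rightarrow> bool" where
  "env_strategy M Rs \<pi> \<longleftrightarrow> (\<forall>h m t. m \<in> M \<longrightarrow> \<pi> h (m, t) \<in> Rs m)"

fun play :: "(('m,'n) history \<Rightarrow> 'm \<times> real) \<Rightarrow> (('m,'n) history \<Rightarrow> 'm \<times> real \<Rightarrow> real^'n)
      \<Rightarrow> nat \<Rightarrow> ('m,'n) history" where
  "play \<sigma> \<pi> 0 = []"
| "play \<sigma> \<pi> (Suc k) = play \<sigma> \<pi> k @ [(\<sigma> (play \<sigma> \<pi> k), \<pi> (play \<sigma> \<pi> k) (\<sigma> (play \<sigma> \<pi> k)))]"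

text \<open>Round i+1 (0-indexed as i): timed move and rate.\<close>
definition move_at :: "(('m,'n) history \<Rightarrow> 'm \<times> real) \<Rightarrow> (('m,'n) history \<Rightarrow> 'm \<times> real \<Rightarrow> real^'n)
      \<Rightarrow> nat \<Rightarrow> 'm \<times> real" where
  "move_at \<sigma> \<pi> i = \<sigma> (play \<sigma> \<pi> i)"

definition rate_at :: "(('m,'n) history \<Rightarrow> 'm \<times> real) \<Rightarrow> (('m,'n) history \<Rightarrow> 'm \<times> real \<Rightarrow> real^'n)
      \<Rightarrow> nat \<Rightarrow> real^'n" where
  "rate_at \<sigma> \<pi> i = \<pi> (play \<sigma> \<pi> i) (move_at \<sigma> \<pi> i)"

definition state_at :: "real^'n \<Rightarrow> (('m,'n) history \<Rightarrow> 'm \<times> real) \<Rightarrow>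
      (('m,'n) history \<Rightarrow> 'm \<times> real \<Rightarrow> real^'n) \<Rightarrow> nat \<Rightarrow> real^'n" where
  "state_at x0 \<sigma> \<pi> i = x0 + (\<Sum>j<i. snd (move_at \<sigma> \<pi> j) *\<^sub>R rate_at \<sigma> \<pi> j)"

definition run_safe :: "(real^'n) set \<Rightarrow> real^'n \<Rightarrow> (('m,'n) history \<Rightarrow> 'm \<times> real) \<Rightarrow>
      (('m,'n) history \<Rightarrow> 'm \<times> real \<Rightarrow> real^'n) \<Rightarrow> bool" where
  "run_safe S x0 \<sigma> \<pi> \<longleftrightarrow> (\<forall>i. state_at x0 \<sigma> \<pi> i \<in> S \<and>
      (\<forall>t. 0 \<le> t \<and> t \<le> snd (move_at \<sigma> \<pi> i) \<longrightarrow> state_at x0 \<sigma> \<pi> i + t *\<^sub>R rate_at \<sigma> \<pi> i \<in> S))"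

definition run_nonzeno :: "(('m,'n) history \<Rightarrow> 'm \<times> real) \<Rightarrow>
      (('m,'n) history \<Rightarrow> 'm \<times> real \<Rightarrow> real^'n) \<Rightarrow> bool" where
  "run_nonzeno \<sigma> \<pi> \<longleftrightarrow> filterlim (\<lambda>k. \<Sum>i<k. snd (move_at \<sigma> \<pi> i)) at_top sequentially"

definition winning :: "'m set \<Rightarrow> ('m \<Rightarrow> (real^'n) set) \<Rightarrow> (real^'n) set \<Rightarrow> real^'n \<Rightarrow>
      (('m,'n) history \<Rightarrow> 'm \<times> real) \<Rightarrow> bool" where
  "winning M Rs S x0 \<sigma> \<longleftrightarrow> sched_strategy M \<sigma> \<and>
     (\<forall>\<pi>. env_strategy M Rs \<pi> \<longrightarrow> run_safe S x0 \<sigma> \<pi> \<and> run_nonzeno \<sigma> \<pi>)"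

end

theory Submission
  imports Defs
begin

text \<open>
  If \<open>\<H>\<close> is unsafe, some vertex instance \<open>R\<close> has \<open>0 \<notin> conv (R ` M)\<close>, so a hyperplane
  \<open>\<langle>a, x\<rangle> = b > 0\<close> separates every rate \<open>R m\<close> from the origin.  The environment that always
  answers \<open>R m\<close> then pushes \<open>\<langle>a, x\<rangle>\<close> up by at least \<open>b\<close> per time unit, and a non-Zeno run
  leaves the bounded set \<open>S\<close>.

  Conversely, if \<open>\<H>\<close> is safe then for every direction \<open>w\<close> some mode has all its rates in the
  half-space \<open>\<langle>w, r\<rangle> \<le> 0\<close> (otherwise a vertex instance with \<open>\<langle>w, R m\<rangle> > 0\<close> for all \<open>m\<close>
  would be unsafe).  Choosing in round \<open>i\<close> such a mode for \<open>w = x\<^sub>i - x\<^sub>0\<close> and duration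
  \<open>c / (i + 1)\<close>, with \<open>B\<close> a bound on all rates, gives \<open>\<parallel>x\<^sub>i\<^sub>+\<^sub>1 - x\<^sub>0\<parallel>\<^sup>2 \<le> \<parallel>x\<^sub>i - x\<^sub>0\<parallel>\<^sup>2 + (c B / (i + 1))\<^sup>2\<close>, and the squared
  distance stays below \<open>2 (c B)\<^sup>2\<close>, while the harmonic series makes the run non-Zeno.
\<close>

lemma convex_hull_image_weights:
  fixes R :: "'m \<Rightarrow> 'a::real_vector"
  assumes fin: "finite M" and y: "y \<in> convex hull (R ` M)"
  shows "\<exists>t. (\<forall>m\<in>M. 0 \<le> t m) \<and> (\<Sum>m\<in>M. t m) = 1 \<and> (\<Sum>m\<in>M. t m *\<^sub>R R m) = y"
proof -
  obtain u where u: "\<forall>z\<in>R ` M. 0 \<le> u z" "sum u (R ` M) = 1" "(\<Sum>z\<in>R ` M. u z *\<^sub>R z) = y"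
    using y by (auto simp: convex_hull_finite[OF finite_imageI[OF fin]])
  \<comment> \<open>the weight of a point is shared equally among the modes with that rate\<close>
  define c where "c z = real (card {m\<in>M. R m = z})" for z
  have c_pos: "0 < c z" if "z \<in> R ` M" for z
    using that fin by (auto simp: c_def card_gt_0_iff)
  define t where "t m = u (R m) / c (R m)" for m
  have fibre_sum: "(\<Sum>m\<in>{m\<in>M. R m = z}. t m) = u z" if "z \<in> R ` M" for z
  proof -
    have "(\<Sum>m\<in>{m\<in>M. R m = z}. t m) = (\<Sum>m\<in>{m\<in>M. R m = z}. u z / c z)"
      by (rule sum.cong) (auto simp: t_def)
    also have "\<dots> = u z" using c_pos[OF that] by (simp add: c_def)
    finally show ?thesis .
  qed
  have "(\<Sum>m\<in>M. t m) = (\<Sum>z\<in>R ` M. \<Sum>m\<in>{m\<in>M. R m = z}. t m)"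
    by (rule sum.image_gen[OF fin])
  also have "\<dots> = 1" using fibre_sum u by simp
  finally have sum_one: "(\<Sum>m\<in>M. t m) = 1" .
  have "(\<Sum>m\<in>M. t m *\<^sub>R R m) = (\<Sum>z\<in>R ` M. \<Sum>m\<in>{m\<in>M. R m = z}. t m *\<^sub>R R m)"
    by (rule sum.image_gen[OF fin])
  also have "\<dots> = (\<Sum>z\<in>R ` M. (\<Sum>m\<in>{m\<in>M. R m = z}. t m) *\<^sub>R z)"
    by (intro sum.cong refl) (simp add: scaleR_sum_left)
  also have "\<dots> = y" using fibre_sum u by simp
  finally have "(\<Sum>m\<in>M. t m *\<^sub>R R m) = y" .
  moreover have "\<forall>m\<in>M. 0 \<le> t m"
    using u c_pos by (simp add: t_def less_imp_le)
  ultimately show ?thesis using sum_one by blast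
qed

lemma cms_safe_if_zero_in_convex_hull:
  "finite M \<Longrightarrow> 0 \<in> convex hull (R ` M) \<Longrightarrow> cms_safe M R"
  unfolding cms_safe_def by (rule convex_hull_image_weights)

lemma cms_safe_imp_nonpositive_rate:
  assumes fin: "finite M" and safe: "cms_safe M R"
  shows "\<exists>m\<in>M. inner w (R m) \<le> 0"
proof (rule ccontr)
  assume "\<not> ?thesis"
  then have pos: "\<forall>m\<in>M. 0 < inner w (R m)" by auto
  obtain t where t: "\<forall>m\<in>M. 0 \<le> t m" "(\<Sum>m\<in>M. t m) = 1" "(\<Sum>m\<in>M. t m *\<^sub>R R m) = 0"
    using safe by (auto simp: cms_safe_def)
  obtain m0 where m0: "m0 \<in> M" "0 < t m0"
    using t(1,2) sum_nonpos[of M t] by (metis less_eq_real_def not_one_le_zero)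
  have "0 < t m0 * inner w (R m0)" using m0 pos by simp
  also have "\<dots> \<le> (\<Sum>m\<in>M. t m * inner w (R m))"
    using m0 t(1) pos fin by (intro member_le_sum) (auto simp: less_imp_le)
  also have "\<dots> = inner w (\<Sum>m\<in>M. t m *\<^sub>R R m)"
    by (simp add: inner_sum_right)
  finally show False using t(3) by simp
qed

lemma compact_convex_subset_if_extreme_points_subset:
  fixes S :: "'a::euclidean_space set"
  assumes "compact S" "convex S" "convex C" "{x. x extreme_point_of S} \<subseteq> C"
  shows "S \<subseteq> C"
proof -
  have "S = convex hull {x. x extreme_point_of S}"
    using assms(1,2) by (rule Krein_Milman_Minkowski)
  also have "\<dots> \<subseteq> C"
    using assms(4,3) by (rule hull_minimal)
  finally show ?thesis .
qed

lemma mms_safe_imp_inward_mode: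
  assumes bms: "is_BMS M Rs" and safe: "mms_safe M Rs"
  shows "\<exists>m\<in>M. \<forall>r\<in>Rs m. inner w r \<le> 0"
proof (rule ccontr)
  assume "\<not> ?thesis"
  then have outward: "\<not> Rs m \<subseteq> {x. inner w x \<le> 0}" if "m \<in> M" for m
    using that by auto
  have "\<exists>v\<in>vertices (Rs m). 0 < inner w v" if "m \<in> M" for m
  proof (rule ccontr)
    assume "\<not> ?thesis"
    then have "{x. x extreme_point_of Rs m} \<subseteq> {x. inner w x \<le> 0}"
      by (auto simp: vertices_def not_less)
    moreover have "polytope (Rs m)" using bms that by (simp add: is_BMS_def)
    ultimately have "Rs m \<subseteq> {x. inner w x \<le> 0}"
      using compact_convex_subset_if_extreme_points_subset convex_halfspace_le
        polytope_imp_compact polytope_imp_convex by blast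
    then show False using outward that by blast
  qed
  then obtain R where R: "\<forall>m\<in>M. R m \<in> vertices (Rs m) \<and> 0 < inner w (R m)"
    by metis
  then have "cms_safe M R" using safe by (simp add: mms_safe_def)
  moreover have "finite M" using bms by (simp add: is_BMS_def)
  ultimately obtain m where "m \<in> M" "inner w (R m) \<le> 0"
    using cms_safe_imp_nonpositive_rate by blast
  then show False using R by force
qed

lemma state_at_Suc:
  "state_at x0 \<sigma> \<pi> (Suc i) = state_at x0 \<sigma> \<pi> i + snd (move_at \<sigma> \<pi> i) *\<^sub>R rate_at \<sigma> \<pi> i"
  by (simp add: state_at_def)

lemma inner_state_at_ge:
  assumes "sched_strategy M \<sigma>" and drift: "\<forall>i. b \<le> inner a (rate_at \<sigma> \<pi> i)"
  shows "inner a x0 + b * (\<Sum>i<k. snd (move_at \<sigma> \<pi> i)) \<le> inner a (state_at x0 \<sigma> \<pi> k)"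
proof (induction k)
  case 0
  show ?case by (simp add: state_at_def)
next
  case (Suc k)
  let ?t = "snd (move_at \<sigma> \<pi> k)"
  have "0 < ?t"
    using assms(1) by (simp add: sched_strategy_def move_at_def)
  then have "b * ?t \<le> ?t * inner a (rate_at \<sigma> \<pi> k)"
    using drift by (simp add: mult.commute mult_right_mono)
  then show ?case
    using Suc.IH by (simp add: state_at_Suc algebra_simps)
qed

lemma nonzeno_safe_run_no_drift:
  assumes "bounded S" "run_safe S x0 \<sigma> \<pi>" "run_nonzeno \<sigma> \<pi>" "sched_strategy M \<sigma>"
    and "0 < b" "\<forall>i. b \<le> inner a (rate_at \<sigma> \<pi> i)"
  shows False
proof -
  obtain K where K: "\<forall>y\<in>S. norm y \<le> K"
    using \<open>bounded S\<close> by (auto simp: bounded_iff)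
  have upper: "inner a (state_at x0 \<sigma> \<pi> k) \<le> norm a * K" for k
  proof -
    have "norm (state_at x0 \<sigma> \<pi> k) \<le> K" using K assms(2) by (simp add: run_safe_def)
    then have "norm a * norm (state_at x0 \<sigma> \<pi> k) \<le> norm a * K"
      by (simp add: mult_left_mono)
    then show ?thesis using Cauchy_Schwarz_ineq2[of a "state_at x0 \<sigma> \<pi> k"] by linarith
  qed
  obtain k where "(norm a * K - inner a x0 + 1) / b \<le> (\<Sum>i<k. snd (move_at \<sigma> \<pi> i))"
    using assms(3) unfolding run_nonzeno_def filterlim_at_top eventually_sequentially by blast
  then have "norm a * K - inner a x0 + 1 \<le> b * (\<Sum>i<k. snd (move_at \<sigma> \<pi> i))"
    using \<open>0 < b\<close> by (simp add: field_simps)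
  then show False
    using inner_state_at_ge[OF assms(4,6), of x0 k] upper[of k] by linarith
qed

lemma winning_imp_mms_safe:
  fixes M :: "'m set" and Rs :: "'m \<Rightarrow> (real^'n) set"
  assumes bms: "is_BMS M Rs" and "bounded S" and win: "winning M Rs S x0 \<sigma>"
  shows "mms_safe M Rs"
  unfolding mms_safe_def
proof (intro allI impI)
  fix R assume R: "\<forall>m\<in>M. R m \<in> vertices (Rs m)"
  have fin: "finite M" using bms by (simp add: is_BMS_def)
  show "cms_safe M R"
  proof (rule ccontr)
    assume "\<not> cms_safe M R"
    then have "0 \<notin> convex hull (R ` M)"
      using cms_safe_if_zero_in_convex_hull fin by blast
    then obtain a b where "0 < b" and sep: "\<forall>x\<in>convex hull (R ` M). b < inner a x"
      using separating_hyperplane_closed_0[OF convex_convex_hull]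
        compact_imp_closed[OF finite_imp_compact_convex_hull] fin by blast
    define \<pi> where "\<pi> = (\<lambda>(h::('m, 'n) history) (mt::'m \<times> real). R (fst mt))"
    have "env_strategy M Rs \<pi>"
      using R by (auto simp: env_strategy_def \<pi>_def vertices_def extreme_point_of_def)
    then have "run_safe S x0 \<sigma> \<pi>" "run_nonzeno \<sigma> \<pi>" "sched_strategy M \<sigma>"
      using win by (auto simp: winning_def)
    moreover have "\<forall>i. b \<le> inner a (rate_at \<sigma> \<pi> i)"
    proof
      fix i
      have "fst (move_at \<sigma> \<pi> i) \<in> M"
        using \<open>sched_strategy M \<sigma>\<close> by (simp add: sched_strategy_def move_at_def)
      then show "b \<le> inner a (rate_at \<sigma> \<pi> i)"
        using sep hull_subset[of "R ` M" convex] by (force simp: rate_at_def \<pi>_def)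
    qed
    ultimately show False
      using nonzeno_safe_run_no_drift[OF \<open>bounded S\<close>] \<open>0 < b\<close> by blast
  qed
qed

lemma norm_add_scaleR_sq_le:
  fixes v r :: "'a::real_inner"
  assumes "inner v r \<le> 0" "0 \<le> t"
  shows "(norm (v + t *\<^sub>R r))\<^sup>2 \<le> (norm v)\<^sup>2 + (t * norm r)\<^sup>2"
proof -
  have "(norm (v + t *\<^sub>R r))\<^sup>2 = (norm v)\<^sup>2 + 2 * t * inner v r + (t * norm r)\<^sup>2"
    unfolding power_mult_distrib power2_norm_eq_inner
    by (simp add: inner_commute power2_eq_square algebra_simps)
  then show ?thesis using assms by (simp add: mult_nonneg_nonpos)
qed

lemma inward_steps_stay_close:
  fixes x r :: "nat \<Rightarrow> 'a::real_inner"
  assumes step: "\<And>i. x (Suc i) = x i + \<tau> i *\<^sub>R r i"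
    and inward: "\<And>i. inner (x i - x 0) (r i) \<le> 0"
    and bounded: "\<And>i. norm (r i) \<le> B" and nonneg: "\<And>i. 0 \<le> \<tau> i"
    and t: "0 \<le> t" "t \<le> \<tau> i"
  shows "(norm (x i + t *\<^sub>R r i - x 0))\<^sup>2 \<le> B\<^sup>2 * (\<Sum>j<Suc i. (\<tau> j)\<^sup>2)"
proof -
  have move: "(norm (x i + s *\<^sub>R r i - x 0))\<^sup>2 \<le> (norm (x i - x 0))\<^sup>2 + B\<^sup>2 * (\<tau> i)\<^sup>2"
    if "0 \<le> s" "s \<le> \<tau> i" for i s
  proof -
    have "s * norm (r i) \<le> \<tau> i * B"
      using that bounded[of i] by (intro mult_mono) auto
    then have "(s * norm (r i))\<^sup>2 \<le> (\<tau> i * B)\<^sup>2"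
      using that by (intro power_mono) auto
    also have "\<dots> = B\<^sup>2 * (\<tau> i)\<^sup>2"
      by (simp add: power_mult_distrib)
    finally have "(s * norm (r i))\<^sup>2 \<le> B\<^sup>2 * (\<tau> i)\<^sup>2" .
    moreover have "(norm (x i + s *\<^sub>R r i - x 0))\<^sup>2 \<le> (norm (x i - x 0))\<^sup>2 + (s * norm (r i))\<^sup>2"
      using norm_add_scaleR_sq_le[OF inward \<open>0 \<le> s\<close>] by (simp add: algebra_simps)
    ultimately show ?thesis by linarith
  qed
  have start: "(norm (x k - x 0))\<^sup>2 \<le> B\<^sup>2 * (\<Sum>j<k. (\<tau> j)\<^sup>2)" for k
  proof (induction k)
    case (Suc k)
    have "(norm (x (Suc k) - x 0))\<^sup>2 \<le> (norm (x k - x 0))\<^sup>2 + B\<^sup>2 * (\<tau> k)\<^sup>2"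
      using move[of "\<tau> k" k] nonneg[of k] by (simp add: step)
    with Suc.IH show ?case by (simp add: distrib_left)
  qed simp
  show ?thesis
    using move[OF t] start[of i] by (simp add: distrib_left)
qed

lemma sum_inverse_squares_le:
  "(\<Sum>j<n. (1 / real (Suc j))\<^sup>2) \<le> 2 - 2 / real (Suc n)"
proof (induction n)
  case (Suc n)
  define a where "a = real (Suc n)"
  have "a \<ge> 1" by (simp add: a_def)
  have "(2 - 2/(a + 1)) - (2 - 2/a + (1/a)\<^sup>2) = (a - 1) / ((a + 1) * a\<^sup>2)"
    using \<open>a \<ge> 1\<close> by (simp add: field_simps power2_eq_square)
  also have "\<dots> \<ge> 0" using \<open>a \<ge> 1\<close> by simp
  finally have "2 - 2/a + (1/a)\<^sup>2 \<le> 2 - 2/(a + 1)" by simp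
  with Suc show ?case by (simp add: a_def add.commute)
qed simp

text \<open>The strategy must recover the current state from the history alone.\<close>
definition history_state :: "real^'n \<Rightarrow> ('m, 'n) history \<Rightarrow> real^'n" where
  "history_state x0 h = x0 + sum_list (map (\<lambda>((m, t), r). t *\<^sub>R r) h)"

lemma length_play: "length (play \<sigma> \<pi> i) = i"
  by (induction i) auto

lemma history_state_play: "history_state x0 (play \<sigma> \<pi> i) = state_at x0 \<sigma> \<pi> i"
proof (induction i)
  case (Suc i)
  then show ?case
    by (simp add: state_at_Suc move_at_def rate_at_def history_state_def case_prod_beta add.assoc)
qed (simp add: history_state_def state_at_def)

lemma mms_safe_imp_winning:
  fixes M :: "'m set" and Rs :: "'m \<Rightarrow> (real^'n) set"
  assumes bms: "is_BMS M Rs" and safe: "mms_safe M Rs" and x0: "x0 \<in> interior S"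
  shows "\<exists>\<sigma>. winning M Rs S x0 \<sigma>"
proof -
  have "finite M" using bms by (simp add: is_BMS_def)
  then have "bounded (\<Union>m\<in>M. Rs m)"
    by (rule bounded_UN) (use bms polytope_imp_bounded in \<open>auto simp: is_BMS_def\<close>)
  then obtain B where "0 < B" and B: "\<And>m r. m \<in> M \<Longrightarrow> r \<in> Rs m \<Longrightarrow> norm r \<le> B"
    unfolding bounded_pos by blast
  obtain \<epsilon> where "0 < \<epsilon>" and ball: "ball x0 \<epsilon> \<subseteq> S" using x0 by (auto simp: mem_interior)
  define c where "c = \<epsilon> / (2 * B)"
  have "0 < c" using \<open>0 < \<epsilon>\<close> \<open>0 < B\<close> by (simp add: c_def)
  define mode where
    "mode h = (SOME m. m \<in> M \<and> (\<forall>r\<in>Rs m. inner (history_state x0 h - x0) r \<le> 0))"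
    for h :: "('m, 'n) history"
  have "mode h \<in> M \<and> (\<forall>r\<in>Rs (mode h). inner (history_state x0 h - x0) r \<le> 0)" for h
    unfolding mode_def by (rule someI_ex) (use mms_safe_imp_inward_mode[OF bms safe] in blast)
  then have mode: "mode h \<in> M" "\<And>r. r \<in> Rs (mode h) \<Longrightarrow> inner (history_state x0 h - x0) r \<le> 0"
    for h
    by auto
  define \<sigma> where "\<sigma> h = (mode h, c / real (Suc (length h)))" for h :: "('m, 'n) history"
  have "winning M Rs S x0 \<sigma>"
    unfolding winning_def
  proof (intro conjI allI impI)
    show "sched_strategy M \<sigma>" using mode \<open>0 < c\<close> by (simp add: sched_strategy_def \<sigma>_def)
    fix \<pi> assume env: "env_strategy M Rs \<pi>"
    let ?x = "state_at x0 \<sigma> \<pi>" and ?r = "rate_at \<sigma> \<pi>" and ?\<tau> = "\<lambda>i. c / real (Suc i)"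
    have move: "move_at \<sigma> \<pi> i = (mode (play \<sigma> \<pi> i), ?\<tau> i)" for i
      by (simp add: move_at_def \<sigma>_def length_play)
    have rate: "?r i \<in> Rs (mode (play \<sigma> \<pi> i))" for i
      using env mode by (simp add: rate_at_def move env_strategy_def)
    have close: "(norm (?x i + t *\<^sub>R ?r i - x0))\<^sup>2 \<le> (c * B)\<^sup>2 * 2"
      if "0 \<le> t" "t \<le> ?\<tau> i" for i t
    proof -
      have "(norm (?x i + t *\<^sub>R ?r i - ?x 0))\<^sup>2 \<le> B\<^sup>2 * (\<Sum>j<Suc i. (?\<tau> j)\<^sup>2)"
      proof (rule inward_steps_stay_close[where x = ?x and r = ?r and \<tau> = ?\<tau>])
        show "?x (Suc j) = ?x j + ?\<tau> j *\<^sub>R ?r j" for j by (simp add: state_at_Suc move)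
        show "inner (?x j - ?x 0) (?r j) \<le> 0" for j
          using mode(2)[OF rate[of j]] by (simp add: history_state_play state_at_def)
        show "norm (?r j) \<le> B" for j using B mode(1) rate by blast
        show "0 \<le> ?\<tau> j" for j using \<open>0 < c\<close> by simp
      qed (use that in auto)
      also have "\<dots> = (c * B)\<^sup>2 * (\<Sum>j<Suc i. (1 / real (Suc j))\<^sup>2)"
        by (simp add: sum_distrib_left power_mult_distrib divide_inverse mult_ac del: sum.lessThan_Suc)
      also have "\<dots> \<le> (c * B)\<^sup>2 * 2"
      proof (rule mult_left_mono)
        show "(\<Sum>j<Suc i. (1 / real (Suc j))\<^sup>2) \<le> 2"
          using sum_inverse_squares_le[of "Suc i"] divide_nonneg_nonneg[of 2 "real (Suc (Suc i))"]
          by linarith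
      qed simp
      finally show ?thesis by (simp add: state_at_def)
    qed
    have inside: "?x i + t *\<^sub>R ?r i \<in> S" if "0 \<le> t" "t \<le> ?\<tau> i" for i t
    proof -
      have "(c * B)\<^sup>2 * 2 < \<epsilon>\<^sup>2"
        using \<open>0 < \<epsilon>\<close> \<open>0 < B\<close> by (simp add: c_def power2_eq_square field_simps)
      then have "norm (?x i + t *\<^sub>R ?r i - x0) < \<epsilon>"
        using close[OF that] \<open>0 < \<epsilon>\<close> by (smt (verit) power_less_imp_less_base)
      then show ?thesis using ball by (auto simp: dist_norm norm_minus_commute)
    qed
    show "run_safe S x0 \<sigma> \<pi>"
      unfolding run_safe_def using inside[of 0] inside \<open>0 < c\<close> by (simp add: move)
    have "(\<lambda>k. \<Sum>i<k. snd (move_at \<sigma> \<pi> i)) = (\<lambda>k. c * harm k)"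
      by (simp add: move harm_altdef sum_distrib_left divide_inverse)
    then show "run_nonzeno \<sigma> \<pi>"
      unfolding run_nonzeno_def
      using filterlim_tendsto_pos_mult_at_top[OF tendsto_const \<open>0 < c\<close> harm_at_top] by simp
  qed
  then show ?thesis by blast
qed

theorem theorem3:
  fixes M :: "'m set" and Rs :: "'m \<Rightarrow> (real^'n) set" and S :: "(real^'n) set"
    and x0 :: "real^'n"
  assumes "is_BMS M Rs"
    and "polytope S"
    and "x0 \<in> interior S"
  shows "(\<exists>\<sigma>. winning M Rs S x0 \<sigma>) \<longleftrightarrow> mms_safe M Rs"
  using winning_imp_mms_safe[OF assms(1) polytope_imp_bounded[OF assms(2)]]
    mms_safe_imp_winning[OF assms(1) _ assms(3)] by blast

end
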